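(* Let $a,b\in C^0(\mathbb{R})$ be even and positive, and let $G\in C^0(\mathbb{R})$ be even with $G(s)\ge G(M)=0$ for all $s\in\mathbb{R}$ and $G(s)>0$ for $s\in[0,M)$, for some $M>0$. Let $L>0$, $m\ge0$ and $t\in[0,L)$. Then $$\inf_{v\in H^1_m((-L,L))}\mathcal{E}(v,(-L,L))\le \frac{M^2+m^2}{\int_t^L 1/a}+2G_1\int_t^L b,$$ where $G_1:=\sup_{s\in(-m,\overline M)}G(s)$ and $\overline M:=\max\{m,M\}$.
   Context: $H^1_m((-L,L)):=\{u\in H^1((-L,L)):u(-L)=-m,\ u(L)=m\}$ and $\mathcal{E}(u,(-L,L)):=\int_{-L}^L\{\tfrac12(u')^2a(x)+G(u)b(x)\}\,dx$. *)

theory Defs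
  imports "HOL-Analysis.Analysis"
begin

text \<open>An element is represented by a pair (u, g) where g is the weak derivative of u:
  g is square integrable on (-L,L) and u(x) = u(-L) + integral of g from -L to x
  (absolutely continuous representative). The weak derivative is unique a.e.,
  so the energy below is well defined.\<close>

definition H1_m :: "real \<Rightarrow> real \<Rightarrow> ((real \<Rightarrow> real) \<times> (real \<Rightarrow> real)) set" where
  "H1_m L m = {(u, g). g \<in> borel_measurable lborel
      \<and> set_integrable lborel {-L..L} g
      \<and> set_integrable lborel {-L..L} (\<lambda>x. (g x)^2)
      \<and> u (-L) = -m
      \<and> (\<forall>x\<in>{-L..L}. u x = u (-L) + (LINT y:{-L..x}|lborel. g y))
      \<and> u L = m}"

definition energy :: "(real \<Rightarrow> real) \<Rightarrow> (real \<Rightarrow> real) \<Rightarrow> (real \<Rightarrow> real) \<Rightarrow> real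
    \<Rightarrow> (real \<Rightarrow> real) \<times> (real \<Rightarrow> real) \<Rightarrow> real" where
  "energy a b G L ug = (LINT x:{-L<..<L}|lborel.
      (1/2) * (snd ug x)^2 * a x + G (fst ug x) * b x)"

end

theory Submission
  imports Defs
begin

text \<open>The infimum is bounded by the energy of one explicit competitor. It rises from \<open>-m\<close>
  to \<open>M\<close> on \<open>[-L,-t]\<close>, rests in the well \<open>M\<close> of \<open>G\<close> on \<open>[-t,t]\<close>, and moves from
  \<open>M\<close> to \<open>m\<close> on \<open>[t,L]\<close>. On each ramp its derivative is proportional to \<open>1/a\<close>, the optimal
  profile: a ramp of height \<open>h\<close> over a set of resistance \<open>R = \<integral>1/a\<close> costs \<open>h\<^sup>2/(2R)\<close> of
  kinetic energy. Along the ramps the values stay in \<open>[-m, max m M]\<close>, so the potential energy is at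
  most \<open>G\<^sub>1 \<integral>b\<close> there, and it vanishes on the plateau. Evenness of \<open>a\<close> and \<open>b\<close> makes both
  ramps see \<open>\<integral>\<^sub>t\<^sup>L 1/a\<close> and \<open>\<integral>\<^sub>t\<^sup>L b\<close>, and \<open>(M+m)\<^sup>2 + (M-m)\<^sup>2 = 2(M\<^sup>2+m\<^sup>2)\<close>.\<close>

lemma set_integrable_continuous_on_Icc_subset:
  fixes f :: "real \<Rightarrow> real"
  assumes "continuous_on {c..d} f" "S \<in> sets lborel" "S \<subseteq> {c..d}"
  shows "set_integrable lborel S f"
  using set_integrable_subset[OF borel_integrable_atLeastAtMost'[OF assms(1)]] assms(2,3) .

lemma set_integral_nonneg:
  fixes f :: "'a \<Rightarrow> real"
  assumes "\<And>x. x \<in> S \<Longrightarrow> 0 \<le> f x"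
  shows "0 \<le> (LINT x:S|M. f x)"
  unfolding set_lebesgue_integral_def
  by (rule integral_nonneg_AE) (use assms in \<open>auto simp: indicator_def\<close>)

lemma set_integral_mono_set_nonneg:
  fixes f :: "'a \<Rightarrow> real"
  assumes "S \<in> sets M" "S \<subseteq> T" "set_integrable M T f" "\<And>x. x \<in> T \<Longrightarrow> 0 \<le> f x"
  shows "(LINT x:S|M. f x) \<le> (LINT x:T|M. f x)"
  using assms set_integrable_subset[OF assms(3,1,2)]
  unfolding set_integrable_def set_lebesgue_integral_def
  by (intro integral_mono) (auto simp: indicator_def)

lemma set_integral_eq_up_to_point:
  fixes f :: "real \<Rightarrow> real"
  assumes "set_integrable lborel T f" "S \<in> sets lborel" "S \<subseteq> T" "T - S \<subseteq> {p}"
  shows "(LINT x:S|lborel. f x) = (LINT x:T|lborel. f x)"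
  using assms set_integrable_subset[OF assms(1-3)]
  unfolding set_integrable_def set_lebesgue_integral_def
  by (intro integral_cong_AE eventually_mono[OF AE_lborel_singleton[of p]])
     (auto simp: indicator_def)

lemma set_integral_reflect_even:
  fixes f :: "real \<Rightarrow> real"
  assumes "\<And>x. f (- x) = f x" "set_integrable lborel {c..d} f"
  shows "(LINT x:{-d..<-c}|lborel. f x) = (LINT x:{c..d}|lborel. f x)"
proof -
  have "{x. - x \<in> {-d..<-c}} = {c<..d}" by auto
  then have "(LINT x:{-d..<-c}|lborel. f x) = (LINT x:{c<..d}|lborel. f x)"
    using set_integral_reflect[of "{-d..<-c}" f] assms(1) by simp
  also have "\<dots> = (LINT x:{c..d}|lborel. f x)"
    by (rule set_integral_eq_up_to_point[OF assms(2), of _ c]) auto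
  finally show ?thesis .
qed

lemma set_integral_pos_continuous_on_Icc:
  fixes f :: "real \<Rightarrow> real"
  assumes "continuous_on {c..d} f" "\<And>x. x \<in> {c..d} \<Longrightarrow> 0 < f x" "c < d"
  shows "0 < (LINT x:{c..d}|lborel. f x)"
proof -
  obtain x0 where x0: "x0 \<in> {c..d}" "\<And>y. y \<in> {c..d} \<Longrightarrow> f x0 \<le> f y"
    using continuous_attains_inf[of "{c..d}" f] assms by auto
  have "0 < (d - c) * f x0" using assms x0 by simp
  also have "\<dots> = (LINT x:{c..d}|lborel. f x0)"
    using assms(3) by (simp add: set_integral_const)
  also have "\<dots> \<le> (LINT x:{c..d}|lborel. f x)"
    by (rule set_integral_mono)
       (use x0 borel_integrable_atLeastAtMost'[OF assms(1)]
          borel_integrable_atLeastAtMost'[of c d "\<lambda>_. f x0"] in auto)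
  finally show ?thesis .
qed

lemma set_integral_indicator_add:
  fixes p q :: "'a \<Rightarrow> real"
  assumes "set_integrable M (S \<inter> A) p" "set_integrable M (S \<inter> B) q"
  shows "set_integrable M S (\<lambda>x. indicator A x * p x + indicator B x * q x)"
    and "(LINT x:S|M. indicator A x * p x + indicator B x * q x)
           = (LINT x:S \<inter> A|M. p x) + (LINT x:S \<inter> B|M. q x)"
proof -
  have eq: "(\<lambda>x. indicator S x *\<^sub>R (indicator A x * p x + indicator B x * q x))
      = (\<lambda>x. indicator (S \<inter> A) x *\<^sub>R p x + indicator (S \<inter> B) x *\<^sub>R q x)"
    by (auto simp: indicator_def fun_eq_iff)
  show "set_integrable M S (\<lambda>x. indicator A x * p x + indicator B x * q x)"
    using assms unfolding set_integrable_def eq by (rule Bochner_Integration.integrable_add)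
  show "(LINT x:S|M. indicator A x * p x + indicator B x * q x)
           = (LINT x:S \<inter> A|M. p x) + (LINT x:S \<inter> B|M. q x)"
    using assms unfolding set_integrable_def set_lebesgue_integral_def eq
    by (rule Bochner_Integration.integral_add)
qed

text \<open>No integrability of \<open>f\<close> is required: a non-integrable \<open>f\<close> has integral \<open>0\<close>.\<close>

lemma set_integral_le_nonneg_bound:
  fixes f h :: "'a \<Rightarrow> real"
  assumes "set_integrable M S h" "\<And>x. x \<in> S \<Longrightarrow> f x \<le> h x" "\<And>x. x \<in> S \<Longrightarrow> 0 \<le> h x"
  shows "(LINT x:S|M. f x) \<le> (LINT x:S|M. h x)"
  using assms unfolding set_integrable_def set_lebesgue_integral_def
  by (intro integral_mono') (auto simp: indicator_def)

lemma continuous_le_Sup_greaterThanLessThan: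
  fixes G :: "real \<Rightarrow> real"
  assumes "continuous_on {c..d} G" "c < d" "s \<in> {c..d}"
  shows "G s \<le> Sup (G ` {c<..<d})"
proof (rule continuous_le_on_closure[of "{c<..<d}" G s])
  have "bdd_above (G ` {c..d})"
    using compact_continuous_image[OF assms(1)]
    by (intro bounded_imp_bdd_above compact_imp_bounded) auto
  then have "bdd_above (G ` {c<..<d})" by (rule bdd_above_mono) auto
  then show "\<And>x. x \<in> {c<..<d} \<Longrightarrow> G x \<le> Sup (G ` {c<..<d})"
    by (intro cSup_upper) auto
  show "continuous_on (closure {c<..<d}) G" "s \<in> closure {c<..<d}"
    using assms by auto
qed

lemma le_Sup_ramp_values:
  fixes G :: "real \<Rightarrow> real"
  assumes "continuous_on UNIV G" "0 < M" "0 \<le> m" "s \<in> closed_segment (-m) M \<union> closed_segment M m"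
  shows "G s \<le> Sup (G ` {-m<..<max m M})"
proof -
  have "closed_segment (-m) M \<union> closed_segment M m \<subseteq> {-m..max m M}"
    using assms(2,3) by (auto simp: closed_segment_eq_real_ivl split: if_splits)
  then show ?thesis
    using assms by (intro continuous_le_Sup_greaterThanLessThan continuous_on_subset[OF assms(1)]) auto
qed

lemma in_closed_segment_affine:
  fixes \<alpha> \<beta> p I :: real
  assumes "0 \<le> p" "p \<le> I" "0 < I"
  shows "\<alpha> + (\<beta> - \<alpha>) / I * p \<in> closed_segment \<alpha> \<beta>"
  unfolding in_segment(1)
  by (rule exI[of _ "p / I"]) (use assms in \<open>auto simp: field_simps\<close>)

lemma Inf_energy_le:
  assumes "\<And>x. 0 \<le> a x" "\<And>x. 0 \<le> b x" "\<And>s. 0 \<le> G s" "ug \<in> H1_m L m"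
  shows "Inf (energy a b G L ` H1_m L m) \<le> energy a b G L ug"
proof (rule cInf_lower)
  have "0 \<le> energy a b G L ug'" for ug'
    unfolding energy_def using assms(1-3) by (intro set_integral_nonneg) simp
  then show "bdd_below (energy a b G L ` H1_m L m)"
    by (intro bdd_belowI[of _ 0]) auto
qed (use assms(4) in simp)

locale ramp_profile =
  fixes a :: "real \<Rightarrow> real" and L t m M :: real
  assumes a_cont: "continuous_on UNIV a" and a_pos: "\<And>x. 0 < a x"
    and t_nonneg: "0 \<le> t" and t_less_L: "t < L"
begin

text \<open>The left ramp is half-open so that the ramps stay disjoint when \<open>t = 0\<close>.\<close>

definition left_resistance :: real where
  "left_resistance = (LINT x:{-L..<-t}|lborel. 1 / a x)"

definition right_resistance :: real where
  "right_resistance = (LINT x:{t..L}|lborel. 1 / a x)"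

definition left_slope :: real where
  "left_slope = (M + m) / left_resistance"

definition right_slope :: real where
  "right_slope = (m - M) / right_resistance"

definition profile_deriv :: "real \<Rightarrow> real" where
  "profile_deriv x = indicator {-L..<-t} x * (left_slope * (1 / a x))
           + indicator {t..L} x * (right_slope * (1 / a x))"

definition profile :: "real \<Rightarrow> real" where
  "profile x = -m + (LINT y:{-L..x}|lborel. profile_deriv y)"

lemma inv_a_continuous: "continuous_on UNIV (\<lambda>x. c * (1 / a x))"
  using a_pos by (intro continuous_intros a_cont) (auto simp: less_imp_neq[symmetric])

lemma continuous_set_integrable:
  fixes f :: "real \<Rightarrow> real"
  assumes "continuous_on UNIV f" "S \<in> sets lborel" "S \<subseteq> {-L..L}"
  shows "set_integrable lborel S f"
  using set_integrable_continuous_on_Icc_subset[OF continuous_on_subset[OF assms(1)]] assms(2,3)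
  by blast

lemma inv_a_integrable:
  "S \<in> sets lborel \<Longrightarrow> S \<subseteq> {-L..L} \<Longrightarrow> set_integrable lborel S (\<lambda>x. c * (1 / a x))"
  using continuous_set_integrable[OF inv_a_continuous] .

lemma partial_resistance_bounds:
  assumes "S \<in> sets lborel" "S \<subseteq> A" "A \<subseteq> {-L..L}" "A \<in> sets lborel"
  shows "0 \<le> (LINT x:S|lborel. 1 / a x)" "(LINT x:S|lborel. 1 / a x) \<le> (LINT x:A|lborel. 1 / a x)"
  using a_pos inv_a_integrable[of A 1] assms
  by (auto intro!: set_integral_nonneg set_integral_mono_set_nonneg simp: less_imp_le)

lemma resistances_pos: "0 < left_resistance" "0 < right_resistance"
proof -
  have "0 < (LINT x:{-L..-t}|lborel. 1 / a x)"
    using inv_a_continuous[of 1] a_pos t_nonneg t_less_L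
    by (intro set_integral_pos_continuous_on_Icc) (auto intro: continuous_on_subset)
  also have "\<dots> = left_resistance"
    unfolding left_resistance_def using t_nonneg t_less_L
    by (intro set_integral_eq_up_to_point[symmetric, of _ _ _ "-t"]
        inv_a_integrable[of _ 1, simplified]) auto
  finally show "0 < left_resistance" .
  show "0 < right_resistance"
    unfolding right_resistance_def using inv_a_continuous[of 1] a_pos t_less_L
    by (intro set_integral_pos_continuous_on_Icc) (auto intro: continuous_on_subset)
qed

lemma profile_eq:
  assumes "x \<in> {-L..L}"
  shows "profile x = -m + left_slope * (LINT y:{-L..x} \<inter> {-L..<-t}|lborel. 1 / a y)
                        + right_slope * (LINT y:{-L..x} \<inter> {t..L}|lborel. 1 / a y)"
proof -
  have "(LINT y:{-L..x}|lborel. profile_deriv y)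
      = (LINT y:{-L..x} \<inter> {-L..<-t}|lborel. left_slope * (1 / a y))
        + (LINT y:{-L..x} \<inter> {t..L}|lborel. right_slope * (1 / a y))"
    unfolding profile_deriv_def
    by (rule set_integral_indicator_add(2); rule inv_a_integrable) (use assms in auto)
  then show ?thesis
    unfolding profile_def set_integral_mult_right by simp
qed

lemma profile_deriv_integrable:
  "S \<in> sets lborel \<Longrightarrow> S \<subseteq> {-L..L} \<Longrightarrow> set_integrable lborel S profile_deriv"
  unfolding profile_deriv_def by (rule set_integral_indicator_add(1); rule inv_a_integrable) auto

lemma profile_left_ramp:
  assumes "x \<in> {-L..<t}"
  shows "profile x \<in> closed_segment (-m) M" and "-t \<le> x \<Longrightarrow> profile x = M"
proof -
  define P where "P = (LINT y:{-L..x} \<inter> {-L..<-t}|lborel. 1 / a y)"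
  have "{-L..x} \<inter> {t..L} = {}" using assms by auto
  then have profile_x: "profile x = -m + (M - -m) / left_resistance * P"
    using profile_eq[of x] assms t_less_L
    by (simp add: P_def left_slope_def set_lebesgue_integral_def)
  have "0 \<le> P" "P \<le> left_resistance"
    unfolding P_def left_resistance_def
    using partial_resistance_bounds[of "{-L..x} \<inter> {-L..<-t}" "{-L..<-t}"] t_nonneg t_less_L
    by (auto simp: subset_iff)
  then show "profile x \<in> closed_segment (-m) M"
    unfolding profile_x by (intro in_closed_segment_affine resistances_pos)
  assume "-t \<le> x"
  then have "{-L..x} \<inter> {-L..<-t} = {-L..<-t}" using assms by auto
  then have "P = left_resistance" unfolding P_def left_resistance_def by (simp only:)
  then show "profile x = M" using profile_x resistances_pos by simp
qed

lemma profile_right_ramp: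
  assumes "x \<in> {t..L}"
  shows "profile x \<in> closed_segment M m" and "x = L \<Longrightarrow> profile x = m"
proof -
  define P where "P = (LINT y:{-L..x} \<inter> {t..L}|lborel. 1 / a y)"
  have "{-L..x} \<inter> {-L..<-t} = {-L..<-t}" using assms t_nonneg by auto
  then have profile_x: "profile x = M + (m - M) / right_resistance * P"
    using profile_eq[of x] assms t_nonneg resistances_pos
    by (simp add: P_def left_slope_def right_slope_def left_resistance_def[symmetric])
  have "0 \<le> P" "P \<le> right_resistance"
    unfolding P_def right_resistance_def
    using partial_resistance_bounds[of "{-L..x} \<inter> {t..L}" "{t..L}"] t_nonneg by auto
  then show "profile x \<in> closed_segment M m"
    unfolding profile_x by (intro in_closed_segment_affine resistances_pos)
  assume "x = L"
  then have "{-L..x} \<inter> {t..L} = {t..L}" using t_nonneg t_less_L by auto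
  then have "P = right_resistance" unfolding P_def right_resistance_def by (simp only:)
  then show "profile x = m" using profile_x resistances_pos by simp
qed

lemma profile_left_end: "profile (-L) = -m"
proof -
  have "(LINT y:{-L..-L}|lborel. profile_deriv y) = (LINT y:{}|lborel. profile_deriv y)"
    using t_nonneg t_less_L
    by (intro set_integral_eq_up_to_point[symmetric, OF profile_deriv_integrable, of _ _ "-L"]) auto
  then show ?thesis unfolding profile_def by (simp add: set_lebesgue_integral_def)
qed

lemma profile_in_H1_m: "(profile, profile_deriv) \<in> H1_m L m"
proof -
  have "(\<lambda>x. 1 / a x) \<in> borel_measurable borel"
    using inv_a_continuous[of 1] by (intro borel_measurable_continuous_onI) simp
  then have "profile_deriv \<in> borel_measurable lborel"
    unfolding profile_deriv_def by measurable
  moreover have "set_integrable lborel {-L..L} (\<lambda>x. (profile_deriv x)^2)"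
  proof -
    have "(profile_deriv x)^2 = indicator {-L..<-t} x * (left_slope^2 * (1 / a x)^2)
        + indicator {t..L} x * (right_slope^2 * (1 / a x)^2)" for x
      using t_nonneg by (auto simp: profile_deriv_def indicator_def power_mult_distrib power_divide)
    moreover have "continuous_on UNIV (\<lambda>x. c * (1 / a x)^2)" for c
      using inv_a_continuous[of 1] by (auto intro: continuous_intros)
    ultimately show ?thesis
      by (simp only:) (rule set_integral_indicator_add(1); rule continuous_set_integrable; auto)
  qed
  moreover have "profile L = m"
    using profile_right_ramp(2) t_less_L by simp
  ultimately show ?thesis
    unfolding H1_m_def using profile_deriv_integrable[of "{-L..L}"] profile_left_end
    by (auto simp: profile_def)
qed

lemma profile_range:
  "x \<in> {-L..L} \<Longrightarrow> profile x \<in> closed_segment (-m) M \<union> closed_segment M m"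
  using profile_left_ramp(1)[of x] profile_right_ramp(1)[of x] by (cases "x < t") auto

lemma kinetic_density_profile:
  "1/2 * (profile_deriv x)^2 * a x
    = indicator {-L..<-t} x * (left_slope^2 / 2 * (1 / a x))
      + indicator {t..L} x * (right_slope^2 / 2 * (1 / a x))"
proof -
  have "1/2 * (c * (1 / a x))^2 * a x = c^2 / 2 * (1 / a x)" for c
    using a_pos[of x] by (simp add: power2_eq_square field_simps)
  then show ?thesis
    using t_nonneg by (auto simp: profile_deriv_def indicator_def)
qed

lemma kinetic_energy_profile:
  "set_integrable lborel {-L..L} (\<lambda>x. 1/2 * (profile_deriv x)^2 * a x)"
  "(LINT x:{-L..L}|lborel. 1/2 * (profile_deriv x)^2 * a x)
    = (M + m)^2 / (2 * left_resistance) + (m - M)^2 / (2 * right_resistance)"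
proof -
  have ramps: "{-L..L} \<inter> {-L..<-t} = {-L..<-t}" "{-L..L} \<inter> {t..L} = {t..L}"
    using t_nonneg t_less_L by auto
  have integrable: "set_integrable lborel ({-L..L} \<inter> {-L..<-t}) (\<lambda>x. c * (1 / a x))"
    "set_integrable lborel ({-L..L} \<inter> {t..L}) (\<lambda>x. c * (1 / a x))" for c
    by (rule inv_a_integrable; auto)+
  show "set_integrable lborel {-L..L} (\<lambda>x. 1/2 * (profile_deriv x)^2 * a x)"
    unfolding kinetic_density_profile by (rule set_integral_indicator_add(1)[OF integrable])
  have "(LINT x:{-L..L}|lborel. 1/2 * (profile_deriv x)^2 * a x)
      = left_slope^2 / 2 * left_resistance + right_slope^2 / 2 * right_resistance"
    unfolding kinetic_density_profile set_integral_indicator_add(2)[OF integrable] ramps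
    by (simp only: set_integral_mult_right left_resistance_def right_resistance_def)
  also have "\<dots> = (M + m)^2 / (2 * left_resistance) + (m - M)^2 / (2 * right_resistance)"
    using resistances_pos by (simp add: left_slope_def right_slope_def power2_eq_square)
  finally show "(LINT x:{-L..L}|lborel. 1/2 * (profile_deriv x)^2 * a x)
    = (M + m)^2 / (2 * left_resistance) + (m - M)^2 / (2 * right_resistance)" .
qed

lemma potential_density_profile_le:
  fixes b G :: "real \<Rightarrow> real" and G\<^sub>1 :: real
  assumes b_nonneg: "\<And>x. 0 \<le> b x" and G_M: "G M = 0"
    and G_le: "\<And>s. s \<in> closed_segment (-m) M \<union> closed_segment M m \<Longrightarrow> G s \<le> G\<^sub>1"
    and x: "x \<in> {-L..L}"
  shows "G (profile x) * b x
    \<le> indicator {-L..<-t} x * (G\<^sub>1 * b x) + indicator {t..L} x * (G\<^sub>1 * b x)"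
proof (cases "x \<in> {-t..<t}")
  case True
  then have "profile x = M" "x \<notin> {-L..<-t}" "x \<notin> {t..L}"
    using profile_left_ramp(2)[of x] x by auto
  then show ?thesis using G_M by simp
next
  case False
  then have "indicator {-L..<-t} x + indicator {t..L} x = (1 :: real)"
    using x t_nonneg by (auto simp: indicator_def)
  moreover have "G (profile x) * b x \<le> G\<^sub>1 * b x"
    using G_le[OF profile_range[OF x]] b_nonneg by (simp add: mult_right_mono)
  ultimately show ?thesis by (metis distrib_right mult_1)
qed

lemma energy_profile_le:
  fixes b G :: "real \<Rightarrow> real" and G\<^sub>1 :: real
  assumes b_cont: "continuous_on UNIV b" and b_nonneg: "\<And>x. 0 \<le> b x"
    and G_M: "G M = 0"
    and G_le: "\<And>s. s \<in> closed_segment (-m) M \<union> closed_segment M m \<Longrightarrow> G s \<le> G\<^sub>1"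
  shows "energy a b G L (profile, profile_deriv)
    \<le> (M + m)^2 / (2 * left_resistance) + (m - M)^2 / (2 * right_resistance)
      + G\<^sub>1 * ((LINT x:{-L..<-t}|lborel. b x) + (LINT x:{t..L}|lborel. b x))"
proof -
  define V where
    "V x = indicator {-L..<-t} x * (G\<^sub>1 * b x) + indicator {t..L} x * (G\<^sub>1 * b x)" for x
  define H where "H x = 1/2 * (profile_deriv x)^2 * a x + V x" for x
  have ramps: "{-L..L} \<inter> {-L..<-t} = {-L..<-t}" "{-L..L} \<inter> {t..L} = {t..L}"
    using t_nonneg t_less_L by auto
  have b_integrable: "set_integrable lborel ({-L..L} \<inter> {-L..<-t}) (\<lambda>x. G\<^sub>1 * b x)"
    "set_integrable lborel ({-L..L} \<inter> {t..L}) (\<lambda>x. G\<^sub>1 * b x)"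
    by (intro set_integrable_mult_right continuous_set_integrable[OF b_cont]; auto)+
  have "0 \<le> G\<^sub>1" using G_le[of M] G_M by simp
  then have H_nonneg: "0 \<le> H x" for x
    using a_pos[of x] b_nonneg[of x] by (simp add: H_def V_def)
  have V_integrable: "set_integrable lborel {-L..L} V"
    unfolding V_def by (rule set_integral_indicator_add(1)[OF b_integrable])
  have H_integrable: "set_integrable lborel {-L..L} H"
    unfolding H_def by (rule set_integral_add(1)[OF kinetic_energy_profile(1) V_integrable])
  have "energy a b G L (profile, profile_deriv) \<le> (LINT x:{-L<..<L}|lborel. H x)"
  proof -
    have "set_integrable lborel {-L<..<L} H"
      by (rule set_integrable_subset[OF H_integrable]) auto
    moreover have "1/2 * (profile_deriv x)^2 * a x + G (profile x) * b x \<le> H x"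
      if "x \<in> {-L<..<L}" for x
      using potential_density_profile_le[of b G G\<^sub>1 x, OF b_nonneg G_M G_le] that
      unfolding H_def V_def by simp
    ultimately show ?thesis
      unfolding energy_def fst_conv snd_conv using H_nonneg by (rule set_integral_le_nonneg_bound)
  qed
  also have "\<dots> \<le> (LINT x:{-L..L}|lborel. H x)"
    using H_integrable H_nonneg by (intro set_integral_mono_set_nonneg) auto
  also have "\<dots> = (M + m)^2 / (2 * left_resistance) + (m - M)^2 / (2 * right_resistance)
      + G\<^sub>1 * ((LINT x:{-L..<-t}|lborel. b x) + (LINT x:{t..L}|lborel. b x))"
  proof -
    have "(LINT x:{-L..L}|lborel. V x)
        = G\<^sub>1 * ((LINT x:{-L..<-t}|lborel. b x) + (LINT x:{t..L}|lborel. b x))"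
      unfolding V_def set_integral_indicator_add(2)[OF b_integrable] ramps
      by (simp only: set_integral_mult_right distrib_left)
    then show ?thesis
      unfolding H_def set_integral_add(2)[OF kinetic_energy_profile(1) V_integrable]
        kinetic_energy_profile(2) by simp
  qed
  finally show ?thesis .
qed

end

theorem proposition5p2:
  fixes a b G :: "real \<Rightarrow> real" and M L m t :: real
  assumes a_cont: "continuous_on UNIV a" and a_even: "\<forall>x. a (-x) = a x" and a_pos: "\<forall>x. a x > 0"
    and b_cont: "continuous_on UNIV b" and b_even: "\<forall>x. b (-x) = b x" and b_pos: "\<forall>x. b x > 0"
    and G_cont: "continuous_on UNIV G" and G_even: "\<forall>s. G (-s) = G s"
    and M_pos: "M > 0" and GM: "G M = 0" and G_min: "\<forall>s. G s \<ge> G M"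
    and G_pos: "\<forall>s\<in>{0..<M}. G s > 0"
    and L_pos: "L > 0" and m_nonneg: "m \<ge> 0" and t: "t \<in> {0..<L}"
  shows "Inf (energy a b G L ` H1_m L m)
     \<le> (M^2 + m^2) / (LINT x:{t..L}|lborel. 1 / a x)
        + 2 * Sup (G ` {-m<..<max m M}) * (LINT x:{t..L}|lborel. b x)"
proof -
  from t have t_nonneg: "0 \<le> t" and t_less_L: "t < L" by auto
  interpret ramp_profile a L t m M
    using a_cont a_pos t_nonneg t_less_L by unfold_locales auto
  define I where "I = (LINT x:{t..L}|lborel. 1 / a x)"
  define B where "B = (LINT x:{t..L}|lborel. b x)"
  define G\<^sub>1 where "G\<^sub>1 = Sup (G ` {-m<..<max m M})"
  have resistances: "left_resistance = I" "right_resistance = I"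
    unfolding left_resistance_def right_resistance_def I_def
    by (rule set_integral_reflect_even,
        use a_even t_nonneg in \<open>auto intro: inv_a_integrable[of _ 1, simplified]\<close>)+
  have b_left: "(LINT x:{-L..<-t}|lborel. b x) = B"
    unfolding B_def
    by (rule set_integral_reflect_even)
       (use b_even t_nonneg in \<open>auto intro: continuous_set_integrable[OF b_cont]\<close>)
  have G_le: "G s \<le> G\<^sub>1" if "s \<in> closed_segment (-m) M \<union> closed_segment M m" for s
    unfolding G\<^sub>1_def using G_cont M_pos m_nonneg that by (rule le_Sup_ramp_values)
  have "energy a b G L (profile, profile_deriv)
      \<le> (M + m)^2 / (2 * I) + (m - M)^2 / (2 * I) + G\<^sub>1 * (B + B)"
    using energy_profile_le[of b G G\<^sub>1, OF b_cont less_imp_le[OF b_pos[rule_format]] GM G_le]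
    unfolding resistances b_left B_def .
  also have "\<dots> = (M^2 + m^2) / I + 2 * G\<^sub>1 * B"
    using resistances_pos resistances by (simp add: field_simps power2_eq_square)
  finally have "energy a b G L (profile, profile_deriv) \<le> (M^2 + m^2) / I + 2 * G\<^sub>1 * B" .
  moreover have "Inf (energy a b G L ` H1_m L m) \<le> energy a b G L (profile, profile_deriv)"
    using a_pos b_pos G_min GM profile_in_H1_m by (intro Inf_energy_le) (auto simp: less_imp_le)
  ultimately show ?thesis
    unfolding I_def B_def G\<^sub>1_def by linarith
qed

end
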